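(* Let $p$ be an odd prime, $\mathcal O$ the ring of integers of a finite extension of $\mathbb Q_p$, $g\ge0$ and $r\ge0$. Then (1) $\mathrm{Fil}^r(V_g(\mathcal O))$ is stable under the action of $S_0(p)$; (2) if $P\in\mathrm{Fil}^r(V_g(\mathcal O))$, then $P\big|\begin{pmatrix}1&a\\0&p\end{pmatrix}\in p^rV_g(\mathcal O)$ for every integer $a$.
   Context: $V_g(\mathcal O)$: homogeneous degree-$g$ polynomials in $X,Y$ over $\mathcal O$, with right action of integer matrices $(P|\gamma)(X,Y)=P(dX-cY,-bX+aY)$ for $\gamma=\begin{pmatrix}a&b\\c&d\end{pmatrix}$. $S_0(p)=\{\begin{pmatrix}a&b\\c&d\end{pmatrix}\in M_2(\mathbb Z):ad-bc\ne0,\ p\mid c,\ p\nmid a\}$. $\mathrm{Fil}^r(V_g(\mathcal O))=\{\sum_{j=0}^gb_jX^jY^{g-j}\in V_g(\mathcal O):p^{r-j}\mid b_j\text{ for }0\le j\le r-1\}$. *)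

theory Defs
  imports "HOL-Computational_Algebra.Polynomial" "HOL-Computational_Algebra.Primes"
begin

text \<open>A homogeneous polynomial  P = sum_{j=0}^g b_j X^j Y^(g-j)  of degree g over a ring O is
  represented by its coefficient function  b :: nat => O, with b j = 0 for j > g.
  An integer 2x2 matrix (a b; c d) is represented by the quadruple (a, b, c, d).\<close>

definition Vg :: "nat \<Rightarrow> (nat \<Rightarrow> 'a::comm_ring_1) set" where
  "Vg g = {P. \<forall>j>g. P j = 0}"

text \<open>Right action (P|gamma)(X,Y) = P(dX - cY, -bX + aY).  Dehomogenising at Y = 1,
  the coefficient of X^k Y^(g-k) of  sum_j b_j (dX - cY)^j (-bX + aY)^(g-j)
  is the coefficient of x^k of  sum_j b_j (d x - c)^j (a - b x)^(g-j).\<close>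

definition slash :: "nat \<Rightarrow> (nat \<Rightarrow> 'a::comm_ring_1) \<Rightarrow> int \<times> int \<times> int \<times> int \<Rightarrow> (nat \<Rightarrow> 'a)" where
  "slash g P \<gamma> = (case \<gamma> of (a, b, c, d) \<Rightarrow>
     (\<lambda>k. coeff (\<Sum>j\<le>g. smult (P j)
          ([:- of_int c, of_int d:] ^ j * [:of_int a, - of_int b:] ^ (g - j))) k))"

definition S0 :: "nat \<Rightarrow> (int \<times> int \<times> int \<times> int) set" where
  "S0 p = {(a, b, c, d). a * d - b * c \<noteq> 0 \<and> int p dvd c \<and> \<not> int p dvd a}"

definition Fil :: "nat \<Rightarrow> nat \<Rightarrow> nat \<Rightarrow> (nat \<Rightarrow> 'a::comm_ring_1) set" where
  "Fil p r g = {P \<in> Vg g. \<forall>j<r. (of_nat p ^ (r - j)) dvd P j}"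

definition scaled_Vg :: "nat \<Rightarrow> nat \<Rightarrow> nat \<Rightarrow> (nat \<Rightarrow> 'a::comm_ring_1) set" where
  "scaled_Vg p r g = {(\<lambda>j. of_nat p ^ r * Q j) | Q. Q \<in> Vg g}"

end

theory Submission
  imports Defs
begin

text \<open>When q divides c,
  the factor (dx - c)^j has its x^k-coefficient divisible by q^(j-k); so a coefficient P_j
  divisible by q^(r-j) contributes to the x^k-coefficient a multiple of q^(r-k), which is
  stability of the filtration.  For (1 a; 0 p) the factor is (px)^j, divisible by p^j outright,
  and p^(r-j) p^j = p^r.\<close>

definition slash_poly :: "nat \<Rightarrow> (nat \<Rightarrow> 'a::comm_ring_1) \<Rightarrow> 'a \<Rightarrow> 'a \<Rightarrow> 'a \<Rightarrow> 'a \<Rightarrow> 'a poly" where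
  "slash_poly g P a b c d = (\<Sum>j\<le>g. smult (P j) ([:- c, d:] ^ j * [:a, - b:] ^ (g - j)))"

lemma slash_conv_coeff:
  "slash g P (a, b, c, d) = coeff (slash_poly g P (of_int a) (of_int b) (of_int c) (of_int d))"
  by (simp add: slash_def slash_poly_def)

lemma degree_slash_poly: "degree (slash_poly g P a b c d) \<le> g"
  unfolding slash_poly_def
proof (rule degree_sum_le)
  fix j assume "j \<in> {..g}"
  have "degree ([:- c, d:] ^ j * [:a, - b:] ^ (g - j))
          \<le> degree ([:- c, d:] ^ j) + degree ([:a, - b:] ^ (g - j))"
    by (rule degree_mult_le)
  also have "\<dots> \<le> j * 1 + (g - j) * 1"
    by (intro add_mono order.trans[OF degree_power_le] mult_left_mono) auto
  finally show "degree (smult (P j) ([:- c, d:] ^ j * [:a, - b:] ^ (g - j))) \<le> g"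
    using \<open>j \<in> {..g}\<close> by (simp add: order.trans[OF degree_smult_le])
qed simp

lemma slash_in_Vg: "slash g P \<gamma> \<in> Vg g"
  by (cases \<gamma>)
    (auto simp: Vg_def slash_conv_coeff intro!: coeff_eq_0 dest: le_less_trans[OF degree_slash_poly])

definition poly_fil :: "'a::comm_ring_1 \<Rightarrow> nat \<Rightarrow> 'a poly \<Rightarrow> bool" where
  "poly_fil q n f \<longleftrightarrow> (\<forall>k. q ^ (n - k) dvd coeff f k)"

lemma poly_fil_0: "poly_fil q 0 f"
  by (simp add: poly_fil_def)

lemma poly_fil_mono: "poly_fil q n f \<Longrightarrow> m \<le> n \<Longrightarrow> poly_fil q m f"
  unfolding poly_fil_def by (meson diff_le_mono dvd_trans le_imp_power_dvd)

lemma poly_fil_pCons: "q dvd c \<Longrightarrow> poly_fil q 1 [:c, d:]"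
  by (auto simp: poly_fil_def coeff_pCons split: nat.split)

lemma poly_fil_mult:
  assumes "poly_fil q m f" "poly_fil q n h"
  shows "poly_fil q (m + n) (f * h)"
  unfolding poly_fil_def coeff_mult
proof (intro allI dvd_sum)
  fix k i :: nat assume "i \<in> {..k}"
  have "q ^ (m - i) * q ^ (n - (k - i)) dvd coeff f i * coeff h (k - i)"
    using assms by (simp add: poly_fil_def mult_dvd_mono)
  moreover have "q ^ (m + n - k) dvd q ^ (m - i) * q ^ (n - (k - i))"
    unfolding power_add[symmetric] using \<open>i \<in> {..k}\<close> by (intro le_imp_power_dvd) auto
  ultimately show "q ^ (m + n - k) dvd coeff f i * coeff h (k - i)"
    by (rule dvd_trans[rotated])
qed

lemma poly_fil_power: "poly_fil q n f \<Longrightarrow> poly_fil q (n * j) (f ^ j)"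
  by (induction j) (auto simp: poly_fil_0 dest: poly_fil_mult)

lemma poly_fil_smult:
  assumes "poly_fil q n f" "q ^ m dvd c"
  shows "poly_fil q (m + n) (smult c f)"
  unfolding poly_fil_def
proof
  fix k
  have "q ^ m * q ^ (n - k) dvd c * coeff f k"
    using assms by (simp add: poly_fil_def mult_dvd_mono)
  moreover have "q ^ (m + n - k) dvd q ^ m * q ^ (n - k)"
    unfolding power_add[symmetric] by (rule le_imp_power_dvd) linarith
  ultimately show "q ^ (m + n - k) dvd coeff (smult c f) k"
    by (simp add: dvd_trans)
qed

lemma poly_fil_sum: "(\<And>j. j \<in> A \<Longrightarrow> poly_fil q n (f j)) \<Longrightarrow> poly_fil q n (\<Sum>j\<in>A. f j)"
  unfolding poly_fil_def coeff_sum by (auto intro: dvd_sum)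

lemma poly_fil_slash_poly:
  assumes "q dvd c" and P: "\<And>j. j < r \<Longrightarrow> q ^ (r - j) dvd P j"
  shows "poly_fil q r (slash_poly g P a b c d)"
  unfolding slash_poly_def
proof (rule poly_fil_sum)
  fix j
  let ?f = "[:- c, d:] ^ j * [:a, - b:] ^ (g - j)"
  have "poly_fil q 1 [:- c, d:]"
    using \<open>q dvd c\<close> by (intro poly_fil_pCons) simp
  hence f: "poly_fil q j ?f"
    using poly_fil_mult[OF poly_fil_power poly_fil_0] by fastforce
  show "poly_fil q r (smult (P j) ?f)"
  proof (cases "j < r")
    case True
    then show ?thesis using poly_fil_smult[OF f P[OF True]] by simp
  next
    case False
    then show ?thesis using poly_fil_smult[OF f, of 0 "P j"] by (auto elim: poly_fil_mono)
  qed
qed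

lemma dvd_coeff_slash_poly_upper:
  assumes P: "\<And>j. j < r \<Longrightarrow> q ^ (r - j) dvd P j"
  shows "q ^ r dvd coeff (slash_poly g P a b 0 q) k"
  unfolding slash_poly_def coeff_sum
proof (rule dvd_sum)
  fix j
  have "q ^ r dvd P j * q ^ j"
  proof (cases "j < r")
    case True
    then have "q ^ (r - j) * q ^ j dvd P j * q ^ j" using P by (simp add: mult_dvd_mono)
    with True show ?thesis by (simp add: power_add[symmetric])
  qed (simp add: le_imp_power_dvd)
  moreover have "[:- 0, q:] ^ j = smult (q ^ j) ([:0, 1:] ^ j)"
    by (simp add: smult_power[symmetric])
  ultimately show "q ^ r dvd coeff (smult (P j) ([:- 0, q:] ^ j * [:a, - b:] ^ (g - j))) k"
    by (simp add: mult.assoc[symmetric])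
qed

lemma scaled_VgI:
  assumes "P \<in> Vg g" and dvd: "\<And>k. of_nat p ^ r dvd P k"
  shows "P \<in> scaled_Vg p r g"
proof -
  obtain Q where Q: "\<And>k. P k = of_nat p ^ r * Q k"
    using dvd unfolding dvd_def by metis
  define Q' where "Q' k = (if k \<le> g then Q k else 0)" for k
  have "P = (\<lambda>k. of_nat p ^ r * Q' k)"
    using \<open>P \<in> Vg g\<close> by (auto simp: Q'_def Q Vg_def)
  moreover have "Q' \<in> Vg g" by (simp add: Q'_def Vg_def)
  ultimately show ?thesis unfolding scaled_Vg_def by blast
qed

theorem lemma6p4:
  fixes p g r :: nat
  assumes "prime p" and "odd p"
  shows "(\<forall>\<gamma>\<in>S0 p. \<forall>P\<in>(Fil p r g :: (nat \<Rightarrow> 'a::{idom, ring_char_0}) set).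
            slash g P \<gamma> \<in> Fil p r g)
       \<and> (\<forall>P\<in>(Fil p r g :: (nat \<Rightarrow> 'a) set). \<forall>a::int.
            slash g P (1, a, 0, int p) \<in> scaled_Vg p r g)"
proof (intro conjI ballI allI)
  fix \<gamma> and P :: "nat \<Rightarrow> 'a"
  assume "\<gamma> \<in> S0 p" "P \<in> Fil p r g"
  then obtain a b c d where \<gamma>: "\<gamma> = (a, b, c, d)" and "int p dvd c"
    by (auto simp: S0_def)
  then have "(of_nat p :: 'a) dvd of_int c"
    by (metis dvdE of_int_mult of_int_of_nat_eq dvd_triv_left)
  then show "slash g P \<gamma> \<in> Fil p r g"
    using poly_fil_slash_poly[of "of_nat p" _ r P] \<open>P \<in> Fil p r g\<close> slash_in_Vg[of g P \<gamma>]
    by (auto simp: Fil_def poly_fil_def \<gamma> slash_conv_coeff)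
next
  fix P :: "nat \<Rightarrow> 'a" and a :: int
  assume "P \<in> Fil p r g"
  then show "slash g P (1, a, 0, int p) \<in> scaled_Vg p r g"
    using dvd_coeff_slash_poly_upper[of r "of_nat p" P] slash_in_Vg[of g P "(1, a, 0, int p)"]
    by (intro scaled_VgI) (auto simp: Fil_def slash_conv_coeff)
qed

end
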